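(* Let $b>0$ and let $\psi(x;a,\sigma)$ be as in the context, with $\psi^{(k)}$ its $k$-th derivative in $x$. For every $k\in\mathbb{N}\cup\{0\}$ and $x\in\mathbb{R}$, $$\frac{\partial}{\partial a}\Big(\frac{\psi^{(k)}(x;a,\sigma)}{\psi^{(k+1)}(x;a,\sigma)}\Big)=\frac{\psi^{(k)}(x;a,\sigma)\psi^{(k+2)}(x;a,\sigma)-\psi^{(k+1)}(x;a,\sigma)^2}{b\,\psi^{(k+1)}(x;a,\sigma)^2}>0.$$
   Context: Constants $b>0$, $\rho>0$; parameters $a\in\mathbb{R}$, $\sigma>0$. For $\beta<0$, $D_\beta(x)=\frac{e^{-x^2/4}}{\Gamma(-\beta)}\int_0^\infty t^{-\beta-1}e^{-t^2/2-xt}dt$, and $\psi(x;a,\sigma)=e^{\frac{(bx-a)^2}{2\sigma^2 b}}D_{-\rho/b}\big(-\frac{bx-a}{\sigma b}\sqrt{2b}\big)$, the positive strictly increasing fundamental solution of $\frac12\sigma^2u''+(a-bx)u'-\rho u=0$. *)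

theory Defs
  imports "HOL-Analysis.Analysis"
begin

text \<open>Parabolic cylinder function for \<open>\<beta> < 0\<close> via its integral representation
  (improper integral over \<open>(0,\<infinity>)\<close>, taken as a Henstock--Kurzweil integral).\<close>
definition pcyl_D :: "real \<Rightarrow> real \<Rightarrow> real" where
  "pcyl_D \<beta> x = exp (- x\<^sup>2 / 4) / Gamma (- \<beta>) *
     integral {0<..} (\<lambda>t. t powr (- \<beta> - 1) * exp (- t\<^sup>2 / 2 - x * t))"

text \<open>\<open>\<psi>(x;a,\<sigma>)\<close> with the constants \<open>b\<close>, \<open>\<rho>\<close> as explicit parameters.\<close>
definition psi :: "real \<Rightarrow> real \<Rightarrow> real \<Rightarrow> real \<Rightarrow> real \<Rightarrow> real" where
  "psi b \<rho> a \<sigma> x = exp ((b * x - a)\<^sup>2 / (2 * \<sigma>\<^sup>2 * b)) *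
     pcyl_D (- \<rho> / b) (- ((b * x - a) / (\<sigma> * b)) * sqrt (2 * b))"

definition psi_d :: "real \<Rightarrow> real \<Rightarrow> nat \<Rightarrow> real \<Rightarrow> real \<Rightarrow> real \<Rightarrow> real" where
  "psi_d b \<rho> k a \<sigma> x = (deriv ^^ k) (psi b \<rho> a \<sigma>) x"

end

theory Submission
  imports Defs
begin

(* Substituting the integral representation of D gives
     \<psi>(x;a,\<sigma>) = J (\<rho>/b - 1) (m (x - a/b)) / \<Gamma>(\<rho>/b),   m = sqrt (2 b) / \<sigma>,
   where J p y = \<integral> t^p exp (y t - t^2/2) dt over (0, \<infinity>) is gauss_moment p y.
   Differentiating under the integral sign gives d/dy J p y = J (p + 1) y, so the k-th
   x-derivative of \<psi> is m^k J (\<rho>/b - 1 + k) (m (x - a/b)) / \<Gamma>(\<rho>/b). It depends on a only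
   through x - a/b, so its a-derivative is minus the (k+1)-st x-derivative divided by b, and the
   quotient rule gives the formula. Positivity is the Turan-type inequality
   (J (p + 1) y)^2 < J p y * J (p + 2) y, i.e. \<integral> (t - l)^2 t^p exp (y t - t^2/2) dt > 0
   for l = J (p + 1) y / J p y. *)

definition gauss_kernel :: "real \<Rightarrow> real \<Rightarrow> real \<Rightarrow> real" where
  "gauss_kernel p y t = t powr p * exp (y * t - t\<^sup>2 / 2)"

definition gauss_moment :: "real \<Rightarrow> real \<Rightarrow> real" where
  "gauss_moment p y = integral {0<..} (gauss_kernel p y)"

lemma powr_div_exp_integrable_on:
  fixes p :: real
  assumes "p > -1"
  shows "(\<lambda>t. t powr p / exp t) integrable_on {0<..}"
proof -
  have "(\<lambda>t. t powr p / exp t) integrable_on {0..}"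
    using Gamma_integral_real[of "p + 1"] assms by (auto simp: integrable_on_def)
  moreover have "negligible (({0..} - {0<..}) \<union> ({0<..} - {(0::real)..}))"
    by (rule negligible_subset[of "{0}"]) auto
  ultimately show ?thesis
    using integrable_spike_set_eq by blast
qed

lemma gauss_kernel_nonneg: "gauss_kernel p y t \<ge> 0"
  by (simp add: gauss_kernel_def)

lemma continuous_on_gauss_kernel: "continuous_on {0<..} (gauss_kernel p y)"
  unfolding gauss_kernel_def by (intro continuous_intros) auto

lemma gauss_kernel_le:
  assumes "t > 0"
  shows "gauss_kernel p y t \<le> exp ((y + 1)\<^sup>2 / 2) * (t powr p / exp t)"
proof -
  have "y * t - t\<^sup>2 / 2 \<le> (y + 1)\<^sup>2 / 2 - t"
    using sum_power2_ge_zero[of "t - (y + 1)" 0] by (simp add: power2_eq_square algebra_simps)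
  then have "exp (y * t - t\<^sup>2 / 2) \<le> exp ((y + 1)\<^sup>2 / 2) / exp t"
    by (simp add: exp_diff[symmetric])
  then have "t powr p * exp (y * t - t\<^sup>2 / 2) \<le> t powr p * (exp ((y + 1)\<^sup>2 / 2) / exp t)"
    by (rule mult_left_mono) simp
  then show ?thesis
    unfolding gauss_kernel_def by (simp add: ac_simps)
qed

lemma gauss_kernel_integrable_on:
  assumes "p > -1"
  shows "gauss_kernel p y integrable_on {0<..}"
proof (rule measurable_bounded_by_integrable_imp_integrable_real)
  show "gauss_kernel p y \<in> borel_measurable (lebesgue_on {0<..})"
    by (rule continuous_imp_measurable_on_sets_lebesgue[OF continuous_on_gauss_kernel]) auto
  show "(\<lambda>t. exp ((y + 1)\<^sup>2 / 2) * (t powr p / exp t)) integrable_on {0<..}"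
    using powr_div_exp_integrable_on[OF assms] by (rule integrable_on_mult_right)
qed (use gauss_kernel_le gauss_kernel_nonneg in auto)

lemma abs_exp_minus_one_minus_le:
  fixes u :: real
  shows "\<bar>exp u - 1 - u\<bar> \<le> u\<^sup>2 * exp \<bar>u\<bar>"
proof -
  obtain s where s: "\<bar>s\<bar> \<le> \<bar>u\<bar>" and "exp u = (\<Sum>m<2. u ^ m / fact m) + exp s / fact 2 * u\<^sup>2"
    using Maclaurin_exp_le[of u 2] by blast
  then have "\<bar>exp u - 1 - u\<bar> = u\<^sup>2 * (exp s / 2)"
    by (simp add: numeral_2_eq_2)
  also have "\<dots> \<le> u\<^sup>2 * exp \<bar>u\<bar>"
  proof -
    have "exp s \<le> exp \<bar>u\<bar>"
      using s by (simp add: abs_le_iff)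
    then have "exp s / 2 \<le> exp \<bar>u\<bar>"
      using exp_gt_zero[of s] by linarith
    then show ?thesis
      by (rule mult_left_mono) simp
  qed
  finally show ?thesis .
qed

lemma gauss_kernel_taylor_bound:
  assumes "t > 0" "\<bar>h\<bar> \<le> 1"
  shows "\<bar>gauss_kernel p (y + h) t - gauss_kernel p y t - h * gauss_kernel (p + 1) y t\<bar>
           \<le> h\<^sup>2 * gauss_kernel (p + 2) (y + 1) t"
proof -
  have "gauss_kernel p (y + h) t - gauss_kernel p y t - h * gauss_kernel (p + 1) y t
      = gauss_kernel p y t * (exp (h * t) - 1 - h * t)"
    using assms(1) by (simp add: gauss_kernel_def powr_add algebra_simps exp_add[symmetric])
  then have "\<bar>gauss_kernel p (y + h) t - gauss_kernel p y t - h * gauss_kernel (p + 1) y t\<bar>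
      = gauss_kernel p y t * \<bar>exp (h * t) - 1 - h * t\<bar>"
    by (simp add: abs_mult gauss_kernel_nonneg)
  also have "\<dots> \<le> gauss_kernel p y t * ((h * t)\<^sup>2 * exp t)"
  proof -
    have "\<bar>h * t\<bar> \<le> t"
      using assms by (simp add: abs_mult mult_left_le_one_le)
    then have "(h * t)\<^sup>2 * exp \<bar>h * t\<bar> \<le> (h * t)\<^sup>2 * exp t"
      by (intro mult_left_mono) auto
    then have "\<bar>exp (h * t) - 1 - h * t\<bar> \<le> (h * t)\<^sup>2 * exp t"
      using abs_exp_minus_one_minus_le[of "h * t"] by linarith
    then show ?thesis
      by (intro mult_left_mono gauss_kernel_nonneg)
  qed
  also have "\<dots> = h\<^sup>2 * gauss_kernel (p + 2) (y + 1) t"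
    using assms(1)
    by (simp add: gauss_kernel_def powr_add power2_eq_square algebra_simps exp_add[symmetric])
  finally show ?thesis .
qed

lemma gauss_moment_taylor_bound:
  assumes "p > -1" "\<bar>h\<bar> \<le> 1"
  shows "\<bar>gauss_moment p (y + h) - gauss_moment p y - h * gauss_moment (p + 1) y\<bar>
           \<le> h\<^sup>2 * gauss_moment (p + 2) (y + 1)"
proof -
  have int: "gauss_kernel p (y + h) integrable_on {0<..}" "gauss_kernel p y integrable_on {0<..}"
    "gauss_kernel (p + 1) y integrable_on {0<..}" "gauss_kernel (p + 2) (y + 1) integrable_on {0<..}"
    using assms by (auto intro!: gauss_kernel_integrable_on)
  have "gauss_moment p (y + h) - gauss_moment p y - h * gauss_moment (p + 1) y
      = integral {0<..} (\<lambda>t. gauss_kernel p (y + h) t - gauss_kernel p y t - h * gauss_kernel (p + 1) y t)"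
    unfolding gauss_moment_def using int
    by (simp add: integral_diff integrable_diff integrable_on_mult_right)
  also have "norm \<dots> \<le> integral {0<..} (\<lambda>t. h\<^sup>2 * gauss_kernel (p + 2) (y + 1) t)"
  proof (rule integral_norm_bound_integral)
    show "(\<lambda>t. gauss_kernel p (y + h) t - gauss_kernel p y t - h * gauss_kernel (p + 1) y t)
        integrable_on {0<..}"
      using int by (intro integrable_diff integrable_on_mult_right)
    show "(\<lambda>t. h\<^sup>2 * gauss_kernel (p + 2) (y + 1) t) integrable_on {0<..}"
      using int by (intro integrable_on_mult_right)
  qed (use gauss_kernel_taylor_bound assms(2) in auto)
  also have "\<dots> = h\<^sup>2 * gauss_moment (p + 2) (y + 1)"
    unfolding gauss_moment_def by simp
  finally show ?thesis
    by simp
qed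

lemma has_real_derivative_if_quadratic_remainder:
  fixes f :: "real \<Rightarrow> real"
  assumes "\<And>h. \<bar>h\<bar> \<le> 1 \<Longrightarrow> \<bar>f (y + h) - f y - h * L\<bar> \<le> C * h\<^sup>2"
  shows "(f has_real_derivative L) (at y)"
  unfolding DERIV_def
proof (rule LIM_zero_cancel, rule Lim_null_comparison)
  show "\<forall>\<^sub>F h in at 0. norm ((f (y + h) - f y) / h - L) \<le> C * \<bar>h\<bar>"
    unfolding eventually_at
  proof (intro exI[of _ 1] conjI ballI impI)
    fix h :: real
    assume h: "h \<noteq> 0 \<and> dist h 0 < 1"
    have "norm ((f (y + h) - f y) / h - L) = \<bar>f (y + h) - f y - h * L\<bar> / \<bar>h\<bar>"
      using h by (simp add: field_simps)
    also have "\<dots> \<le> C * h\<^sup>2 / \<bar>h\<bar>"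
      using assms[of h] h by (intro divide_right_mono) auto
    also have "\<dots> = C * \<bar>h\<bar>"
      using h by (simp add: abs_if power2_eq_square)
    finally show "norm ((f (y + h) - f y) / h - L) \<le> C * \<bar>h\<bar>" .
  qed simp
  show "((\<lambda>h. C * \<bar>h\<bar>) \<longlongrightarrow> 0) (at 0)"
    by (auto intro!: tendsto_eq_intros)
qed

lemma gauss_moment_has_real_derivative:
  assumes "p > -1"
  shows "(gauss_moment p has_real_derivative gauss_moment (p + 1) y) (at y)"
  by (rule has_real_derivative_if_quadratic_remainder[where C = "gauss_moment (p + 2) (y + 1)"])
     (use gauss_moment_taylor_bound[OF assms] in \<open>simp add: mult.commute\<close>)

lemma has_integral_pos_if_continuous_nonneg:
  fixes g :: "real \<Rightarrow> real"
  assumes g: "(g has_integral I) {0<..}" and cont: "continuous_on {0<..} g"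
    and nonneg: "\<And>t. t > 0 \<Longrightarrow> g t \<ge> 0" and "t\<^sub>0 > 0" "g t\<^sub>0 > 0"
  shows "I > 0"
proof -
  have sub: "{t\<^sub>0 / 2..t\<^sub>0} \<subseteq> {0<..}"
    using \<open>t\<^sub>0 > 0\<close> by auto
  have cont': "continuous_on {t\<^sub>0 / 2..t\<^sub>0} g"
    using cont sub by (rule continuous_on_subset)
  then have int: "g integrable_on {t\<^sub>0 / 2..t\<^sub>0}"
    by (rule integrable_continuous_real)
  have "integral {t\<^sub>0 / 2..t\<^sub>0} g \<noteq> 0"
  proof
    assume "integral {t\<^sub>0 / 2..t\<^sub>0} g = 0"
    then have "(g has_integral 0) (cbox (t\<^sub>0 / 2) t\<^sub>0)"
      using int by (metis cbox_interval has_integral_integral)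
    then have "g t\<^sub>0 = 0"
      by (rule has_integral_0_cbox_imp_0[rotated 2]) (use cont' nonneg \<open>t\<^sub>0 > 0\<close> in auto)
    then show False
      using \<open>g t\<^sub>0 > 0\<close> by simp
  qed
  moreover have "integral {t\<^sub>0 / 2..t\<^sub>0} g \<ge> 0"
    using int by (rule integral_nonneg) (use nonneg \<open>t\<^sub>0 > 0\<close> in auto)
  moreover have "integral {t\<^sub>0 / 2..t\<^sub>0} g \<le> I"
    using integral_subset_le[OF sub int has_integral_integrable[OF g]] nonneg
      integral_unique[OF g] by auto
  ultimately show ?thesis
    by linarith
qed

lemma gauss_kernel_has_integral:
  assumes "p > -1"
  shows "(gauss_kernel p y has_integral gauss_moment p y) {0<..}"
  unfolding gauss_moment_def using gauss_kernel_integrable_on[OF assms] by (rule integrable_integral)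

lemma gauss_moment_pos:
  assumes "p > -1"
  shows "gauss_moment p y > 0"
  by (rule has_integral_pos_if_continuous_nonneg[where t\<^sub>0 = 1, OF gauss_kernel_has_integral[OF assms]
        continuous_on_gauss_kernel gauss_kernel_nonneg]) (simp_all add: gauss_kernel_def)

lemma gauss_moment_turan:
  assumes "p > -1"
  shows "(gauss_moment (p + 1) y)\<^sup>2 < gauss_moment p y * gauss_moment (p + 2) y"
proof -
  define l where "l = gauss_moment (p + 1) y / gauss_moment p y"
  have "((\<lambda>t. gauss_kernel (p + 2) y t - 2 * l * gauss_kernel (p + 1) y t + l\<^sup>2 * gauss_kernel p y t)
      has_integral gauss_moment (p + 2) y - 2 * l * gauss_moment (p + 1) y + l\<^sup>2 * gauss_moment p y) {0<..}"
    using assms by (intro has_integral_add has_integral_diff has_integral_mult_right gauss_kernel_has_integral) auto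
  then have "((\<lambda>t. (t - l)\<^sup>2 * gauss_kernel p y t)
      has_integral gauss_moment (p + 2) y - 2 * l * gauss_moment (p + 1) y + l\<^sup>2 * gauss_moment p y) {0<..}"
    by (rule has_integral_eq[rotated])
       (simp add: gauss_kernel_def powr_add power2_eq_square algebra_simps)
  then have "gauss_moment (p + 2) y - 2 * l * gauss_moment (p + 1) y + l\<^sup>2 * gauss_moment p y > 0"
    by (rule has_integral_pos_if_continuous_nonneg[where t\<^sub>0 = "\<bar>l\<bar> + 1"])
       (auto intro!: continuous_intros continuous_on_gauss_kernel gauss_kernel_nonneg
             simp: gauss_kernel_def)
  moreover have "gauss_moment p y * (gauss_moment (p + 2) y - 2 * l * gauss_moment (p + 1) y
      + l\<^sup>2 * gauss_moment p y) = gauss_moment p y * gauss_moment (p + 2) y - (gauss_moment (p + 1) y)\<^sup>2"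
    using gauss_moment_pos[OF assms, of y] unfolding l_def by (simp add: power2_eq_square field_simps)
  ultimately show ?thesis
    using gauss_moment_pos[OF assms, of y] by (metis diff_gt_0_iff_gt mult_pos_pos)
qed

lemma psi_eq_gauss_moment:
  assumes "b > 0" "\<sigma> > 0"
  shows "psi b \<rho> a \<sigma> x = gauss_moment (\<rho> / b - 1) (sqrt (2 * b) / \<sigma> * (x - a / b)) / Gamma (\<rho> / b)"
proof -
  define u where "u = sqrt (2 * b) / \<sigma> * (x - a / b)"
  have arg: "- ((b * x - a) / (\<sigma> * b)) * sqrt (2 * b) = - u"
    using assms unfolding u_def by (simp add: field_simps)
  have kernel: "(\<lambda>t. t powr (- (- \<rho> / b) - 1) * exp (- t\<^sup>2 / 2 - - u * t)) = gauss_kernel (\<rho> / b - 1) u"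
    by (rule ext) (simp add: gauss_kernel_def algebra_simps)
  have "x - a / b = (b * x - a) / b"
    using assms by (simp add: field_simps)
  then have "(- u)\<^sup>2 / 4 = 2 * b / \<sigma>\<^sup>2 * ((b * x - a)\<^sup>2 / b\<^sup>2) / 4"
    unfolding u_def using assms by (simp add: power_mult_distrib power_divide)
  also have "\<dots> = (b * x - a)\<^sup>2 / (2 * \<sigma>\<^sup>2 * b)"
    using assms by (simp add: field_simps power2_eq_square)
  finally have "exp ((b * x - a)\<^sup>2 / (2 * \<sigma>\<^sup>2 * b)) * exp (- (- u)\<^sup>2 / 4) = 1"
    by (simp add: exp_add[symmetric])
  moreover have "psi b \<rho> a \<sigma> x = exp ((b * x - a)\<^sup>2 / (2 * \<sigma>\<^sup>2 * b)) * exp (- (- u)\<^sup>2 / 4)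
      * gauss_moment (\<rho> / b - 1) u / Gamma (\<rho> / b)"
    unfolding psi_def pcyl_D_def arg kernel gauss_moment_def by simp
  ultimately show ?thesis
    unfolding u_def by simp
qed

lemma psi_d_Suc: "psi_d b \<rho> (Suc k) a \<sigma> = deriv (psi_d b \<rho> k a \<sigma>)"
  unfolding psi_d_def[abs_def] by simp

lemma psi_d_eq_gauss_moment:
  assumes "b > 0" "\<rho> > 0" "\<sigma> > 0"
  shows "psi_d b \<rho> k a \<sigma> = (\<lambda>x. (sqrt (2 * b) / \<sigma>) ^ k / Gamma (\<rho> / b) *
           gauss_moment (\<rho> / b - 1 + k) (sqrt (2 * b) / \<sigma> * (x - a / b)))"
proof (induction k)
  case 0
  show ?case
    unfolding psi_d_def[abs_def] using psi_eq_gauss_moment[OF assms(1,3)] by auto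
next
  case (Suc k)
  define m where "m = sqrt (2 * b) / \<sigma>"
  define u where "u = (\<lambda>x. m * (x - a / b))"
  have q: "-1 < \<rho> / b - 1 + k"
    using assms by (simp add: add_pos_nonneg)
  have du: "(u has_real_derivative m) (at x)" for x
    unfolding u_def by (auto intro!: derivative_eq_intros)
  have deriv_IH: "((\<lambda>x. m ^ k / Gamma (\<rho> / b) * gauss_moment (\<rho> / b - 1 + k) (u x))
      has_real_derivative m ^ k / Gamma (\<rho> / b) * (gauss_moment (\<rho> / b - 1 + k + 1) (u x) * m)) (at x)" for x
    by (rule DERIV_cmult[OF DERIV_chain2[OF gauss_moment_has_real_derivative[OF q] du]])
  have "psi_d b \<rho> (Suc k) a \<sigma> = deriv (\<lambda>x. m ^ k / Gamma (\<rho> / b) * gauss_moment (\<rho> / b - 1 + k) (u x))"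
    unfolding psi_d_Suc Suc.IH u_def m_def ..
  also have "\<dots> = (\<lambda>x. m ^ k / Gamma (\<rho> / b) * (gauss_moment (\<rho> / b - 1 + k + 1) (u x) * m))"
    using deriv_IH by (intro ext DERIV_imp_deriv)
  finally show ?case
    unfolding u_def m_def by (simp add: ac_simps)
qed

lemma psi_d_has_real_derivative_wrt_a:
  assumes "b > 0" "\<rho> > 0" "\<sigma> > 0"
  shows "((\<lambda>a. psi_d b \<rho> k a \<sigma> x) has_real_derivative - psi_d b \<rho> (Suc k) a \<sigma> x / b) (at a)"
proof -
  define m where "m = sqrt (2 * b) / \<sigma>"
  define u where "u = (\<lambda>a. m * (x - a / b))"
  have q: "-1 < \<rho> / b - 1 + k"
    using assms by (simp add: add_pos_nonneg)
  have "(u has_real_derivative - m / b) (at a)"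
    unfolding u_def using assms by (auto intro!: derivative_eq_intros)
  from DERIV_cmult[OF DERIV_chain2[OF gauss_moment_has_real_derivative[OF q] this], of "m ^ k / Gamma (\<rho> / b)"]
  show ?thesis
    unfolding psi_d_eq_gauss_moment[OF assms] m_def[symmetric] u_def
    by (rule DERIV_cong) (simp add: ac_simps)
qed

lemma psi_d_pos:
  assumes "b > 0" "\<rho> > 0" "\<sigma> > 0"
  shows "psi_d b \<rho> k a \<sigma> x > 0"
  unfolding psi_d_eq_gauss_moment[OF assms] using assms
  by (intro mult_pos_pos divide_pos_pos zero_less_power gauss_moment_pos Gamma_real_pos)
     (auto simp: add_pos_nonneg)

lemma psi_d_turan:
  assumes "b > 0" "\<rho> > 0" "\<sigma> > 0"
  shows "(psi_d b \<rho> (Suc k) a \<sigma> x)\<^sup>2 < psi_d b \<rho> k a \<sigma> x * psi_d b \<rho> (k + 2) a \<sigma> x"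
proof -
  define m where "m = sqrt (2 * b) / \<sigma>"
  define c where "c = m ^ k / Gamma (\<rho> / b)"
  define q where "q = \<rho> / b - 1 + k"
  define u where "u = m * (x - a / b)"
  have "c * m > 0"
    using assms unfolding c_def m_def by (simp add: Gamma_real_pos)
  moreover have "(gauss_moment (q + 1) u)\<^sup>2 < gauss_moment q u * gauss_moment (q + 2) u"
    using assms unfolding q_def by (intro gauss_moment_turan) (simp add: add_pos_nonneg)
  ultimately have "(c * m)\<^sup>2 * (gauss_moment (q + 1) u)\<^sup>2
      < (c * m)\<^sup>2 * (gauss_moment q u * gauss_moment (q + 2) u)"
    by (intro mult_strict_left_mono) auto
  moreover have "psi_d b \<rho> k a \<sigma> x = c * gauss_moment q u"
    "psi_d b \<rho> (Suc k) a \<sigma> x = c * m * gauss_moment (q + 1) u"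
    "psi_d b \<rho> (k + 2) a \<sigma> x = c * m\<^sup>2 * gauss_moment (q + 2) u"
    unfolding psi_d_eq_gauss_moment[OF assms] c_def m_def[symmetric] q_def u_def
    by (simp_all add: algebra_simps power2_eq_square)
  ultimately show ?thesis
    by (simp add: power2_eq_square algebra_simps)
qed

theorem lemma5p3:
  fixes b \<rho> a \<sigma> x :: real and k :: nat
  assumes "b > 0" and "\<rho> > 0" and "\<sigma> > 0"
  shows "((\<lambda>a'. psi_d b \<rho> k a' \<sigma> x / psi_d b \<rho> (Suc k) a' \<sigma> x) has_real_derivative
           (psi_d b \<rho> k a \<sigma> x * psi_d b \<rho> (k + 2) a \<sigma> x - (psi_d b \<rho> (Suc k) a \<sigma> x)\<^sup>2)
           / (b * (psi_d b \<rho> (Suc k) a \<sigma> x)\<^sup>2)) (at a)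
       \<and> (psi_d b \<rho> k a \<sigma> x * psi_d b \<rho> (k + 2) a \<sigma> x - (psi_d b \<rho> (Suc k) a \<sigma> x)\<^sup>2)
           / (b * (psi_d b \<rho> (Suc k) a \<sigma> x)\<^sup>2) > 0"
proof
  let ?\<psi> = "\<lambda>j. psi_d b \<rho> j a \<sigma> x"
  have pos: "?\<psi> (Suc k) > 0"
    using assms by (rule psi_d_pos)
  have "((\<lambda>a'. psi_d b \<rho> k a' \<sigma> x / psi_d b \<rho> (Suc k) a' \<sigma> x) has_real_derivative
      ((- ?\<psi> (Suc k) / b) * ?\<psi> (Suc k) - ?\<psi> k * (- ?\<psi> (Suc (Suc k)) / b))
        / (?\<psi> (Suc k) * ?\<psi> (Suc k))) (at a)"
    using pos by (intro DERIV_divide psi_d_has_real_derivative_wrt_a assms) simp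
  then show "((\<lambda>a'. psi_d b \<rho> k a' \<sigma> x / psi_d b \<rho> (Suc k) a' \<sigma> x) has_real_derivative
      (?\<psi> k * ?\<psi> (k + 2) - (?\<psi> (Suc k))\<^sup>2) / (b * (?\<psi> (Suc k))\<^sup>2)) (at a)"
    using \<open>b > 0\<close> pos by (simp add: field_simps power2_eq_square)
  show "(?\<psi> k * ?\<psi> (k + 2) - (?\<psi> (Suc k))\<^sup>2) / (b * (?\<psi> (Suc k))\<^sup>2) > 0"
    using psi_d_turan[OF assms] \<open>b > 0\<close> pos by simp
qed

end
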